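(* Let $n\ge 0$ and let $\delta_B$ be any perfect matching of $\{0,1,\ldots,2n+1\}$. Then the configuration $\delta_B\cup\delta_G$ equals the breakpoint graph $BG(\pi)$ of some signed permutation $\pi$ of $\{1,\dots,n\}$ if and only if the complement configuration $\delta_B\cup\overline{\delta_G}$ is hamiltonian (contains a cycle visiting each of the $2n+2$ vertices exactly once).
   Context: $\delta_G=\{\{2i,2i+1\}:0\le i\le n\}$ and $\overline{\delta_G}=\{\{2i-1,2i\}:1\le i\le n\}\cup\{\{0,2n+1\}\}$; a configuration is a multigraph on $\{0,\dots,2n+1\}$ that is the union of a perfect matching $\delta_B$ with $\delta_G$, and its complement replaces $\delta_G$ by $\overline{\delta_G}$. The breakpoint graph: for a signed permutation $\pi$ of $\{1,\dots,n\}$, let $\pi'$ be the unsigned permutation of $\{1,\dots,2n\}$ obtained by replacing each $\pi_i>0$ by $(2\pi_i-1,2\pi_i)$ and each $\pi_i<0$ by $(2|\pi_i|,2|\pi_i|-1)$, with $\pi'_0=0$, $\pi'_{2n+1}=2n+1$; $BG(\pi)$ is the multigraph on $\{0,\dots,2n+1\}$ with black edges $\{\{\pi'_{2i},\pi'_{2i+1}\}:0\le i\le n\}$ and grey edges $\delta_G$. *)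

theory Defs
  imports Main "HOL-Library.Multiset"
begin

definition verts :: "nat \<Rightarrow> nat set" where
  "verts n = {0..2*n+1}"

text \<open>Edges are 2-element vertex sets; multigraphs are multisets of edges.\<close>
definition perfect_matching :: "nat set \<Rightarrow> nat set set \<Rightarrow> bool" where
  "perfect_matching V M \<longleftrightarrow>
     (\<forall>e\<in>M. e \<subseteq> V \<and> card e = 2) \<and> (\<forall>v\<in>V. \<exists>!e. e \<in> M \<and> v \<in> e)"

definition grey_edges :: "nat \<Rightarrow> nat set set" where
  "grey_edges n = {{2*i, 2*i+1} | i. i \<le> n}"

definition grey_edges_compl :: "nat \<Rightarrow> nat set set" where
  "grey_edges_compl n = {{2*i - 1, 2*i} | i. 1 \<le> i \<and> i \<le> n} \<union> {{0, 2*n+1}}"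

definition configuration :: "nat set set \<Rightarrow> nat \<Rightarrow> nat set multiset" where
  "configuration dB n = mset_set dB + mset_set (grey_edges n)"

definition compl_configuration :: "nat set set \<Rightarrow> nat \<Rightarrow> nat set multiset" where
  "compl_configuration dB n = mset_set dB + mset_set (grey_edges_compl n)"

definition signed_perm :: "nat \<Rightarrow> int list \<Rightarrow> bool" where
  "signed_perm n p \<longleftrightarrow> length p = n \<and> distinct (map abs p) \<and> set (map abs p) = {1..int n}"

text \<open>The unsigned permutation pi' extended by pi'_0 = 0 and pi'_{2n+1} = 2n+1.\<close>
definition unsigned_ext :: "int list \<Rightarrow> nat list" where
  "unsigned_ext p = [0] @ concat (map (\<lambda>x. if x > 0 then [2 * nat x - 1, 2 * nat x]
                                             else [2 * nat \<bar>x\<bar>, 2 * nat \<bar>x\<bar> - 1]) p)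
                    @ [2 * length p + 1]"

definition black_edges :: "int list \<Rightarrow> nat set multiset" where
  "black_edges p = (let q = unsigned_ext p in
     mset (map (\<lambda>i. {q ! (2*i), q ! (2*i+1)}) [0..<length p + 1]))"

definition breakpoint_graph :: "int list \<Rightarrow> nat set multiset" where
  "breakpoint_graph p = black_edges p + mset_set (grey_edges (length p))"

text \<open>Hamiltonian cycle in a multigraph G on vertex set V: a cyclic ordering of all vertices
  such that the consecutive edges (as a multiset, so parallel edges may form a 2-cycle)
  are contained in G.\<close>
definition hamiltonian :: "nat set \<Rightarrow> nat set multiset \<Rightarrow> bool" where
  "hamiltonian V G \<longleftrightarrow> (\<exists>vs. distinct vs \<and> set vs = V \<and>
     mset (map (\<lambda>i. {vs ! i, vs ! ((i + 1) mod length vs)}) [0..<length vs]) \<subseteq># G)"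

end

theory Submission
  imports Defs
begin

(*
  Read the vertex list q = pi' = 0, pi'_1, ..., pi'_2n, 2n+1 of a signed permutation
  as a closed cycle.  Its edges at even positions {q_2i, q_2i+1} are exactly the black edges of
  BG(pi), and its edges at odd positions {q_2i+1, q_2i+2} together with the closing edge {2n+1, 0}
  are exactly the complementary grey edges, since each block pi'_2i+1, pi'_2i+2 is {2k-1, 2k}.
  So q is a Hamiltonian cycle of the complement configuration.  Conversely, a Hamiltonian cycle
  of delta_B + complement-grey alternates between the two perfect matchings (consecutive cycle
  edges share a vertex and are different).  After rotating and reflecting the cycle so that it
  starts at 0 with a black edge, the grey edge at 0 forces it to end in 2n+1, the odd blocks are
  pairs {2k-1, 2k}, and reading them off gives a signed permutation pi with pi' equal to the cycle,
  whose even edges are then delta_B.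
*)

definition cycle_edge :: "'a list \<Rightarrow> nat \<Rightarrow> 'a set" where
  "cycle_edge vs i = {vs ! i, vs ! ((i + 1) mod length vs)}"

definition cycle_edges :: "'a list \<Rightarrow> 'a set multiset" where
  "cycle_edges vs = mset (map (cycle_edge vs) [0..<length vs])"

lemma hamiltonian_iff_cycle_edges:
  "hamiltonian V G \<longleftrightarrow> (\<exists>vs. distinct vs \<and> set vs = V \<and> cycle_edges vs \<subseteq># G)"
  unfolding hamiltonian_def cycle_edges_def cycle_edge_def by simp

lemma mset_map_upt_reindex:
  assumes "inj_on h {..<L}" and "h ` {..<L} \<subseteq> {..<L}"
  shows "mset (map (f \<circ> h) [0..<L]) = mset (map f [0..<L])"
proof -
  have "h ` {..<L} = {..<L}" using assms by (simp add: endo_inj_surj)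
  have "mset (map (f \<circ> h) [0..<L]) = image_mset f (image_mset h (mset_set {..<L}))"
    by (simp flip: mset_set_upto_eq_mset_upto add: lessThan_atLeast0 multiset.map_comp)
  also have "\<dots> = image_mset f (mset_set {..<L})"
    using assms \<open>h ` {..<L} = {..<L}\<close> by (simp add: image_mset_mset_set)
  finally show ?thesis by (simp add: lessThan_atLeast0 flip: mset_set_upto_eq_mset_upto)
qed

lemma cycle_edges_rotate1: "cycle_edges (rotate1 vs) = cycle_edges vs"
proof (cases "vs = []")
  case False
  define L where "L = length vs"
  have "L > 0" using False by (simp add: L_def)
  define h where "h i = Suc i mod L" for i
  have "rotate1 vs ! ((i + 1) mod L) = vs ! ((h i + 1) mod L)" for i
    using \<open>L > 0\<close> by (simp add: nth_rotate1 L_def h_def mod_Suc_eq)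
  then have "map (cycle_edge (rotate1 vs)) [0..<L] = map (cycle_edge vs \<circ> h) [0..<L]"
    by (simp add: cycle_edge_def nth_rotate1 L_def h_def)
  also have "mset \<dots> = mset (map (cycle_edge vs) [0..<L])"
  proof (rule mset_map_upt_reindex)
    show "inj_on h {..<L}" by (rule inj_onI) (auto simp: h_def mod_Suc split: if_splits)
    show "h ` {..<L} \<subseteq> {..<L}" using \<open>L > 0\<close> by (auto simp: h_def)
  qed
  finally show ?thesis by (simp add: cycle_edges_def L_def)
qed simp

lemma cycle_edges_rotate: "cycle_edges (rotate k vs) = cycle_edges vs"
  by (induction k) (simp_all add: cycle_edges_rotate1)

lemma cycle_edges_rev: "cycle_edges (rev vs) = cycle_edges vs"
proof -
  define L where "L = length vs"
  define h where "h i = (if i + 1 = L then i else L - 2 - i)" for i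
  have "cycle_edge (rev vs) i = cycle_edge vs (h i)" if "i < L" for i
  proof (cases "i + 1 = L")
    case True
    have "vs \<noteq> []" and "length vs - 1 = i" using True by (auto simp: L_def)
    then have "rev vs ! 0 = vs ! i" and "rev vs ! i = vs ! 0"
      using rev_nth[of 0 vs] rev_nth[of i vs] that by (simp_all add: L_def)
    then show ?thesis using True by (simp add: cycle_edge_def L_def h_def insert_commute)
  next
    case False
    then have "i + 1 < L" using that by simp
    moreover have "L - 2 - i + 1 = L - 1 - i" using \<open>i + 1 < L\<close> by simp
    ultimately have "rev vs ! i = vs ! (L - 2 - i + 1)" and "rev vs ! (i + 1) = vs ! (L - 2 - i)"
      by (simp_all add: rev_nth L_def)
    moreover have "L - 2 - i + 1 < L" using \<open>i + 1 < L\<close> by simp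
    ultimately show ?thesis using False \<open>i + 1 < L\<close>
      by (simp add: cycle_edge_def L_def h_def insert_commute)
  qed
  then have "map (cycle_edge (rev vs)) [0..<L] = map (cycle_edge vs \<circ> h) [0..<L]" by simp
  also have "mset \<dots> = mset (map (cycle_edge vs) [0..<L])"
  proof (rule mset_map_upt_reindex)
    show "inj_on h {..<L}" by (rule inj_onI) (auto simp: h_def split: if_splits)
    show "h ` {..<L} \<subseteq> {..<L}" by (auto simp: h_def)
  qed
  finally show ?thesis by (simp add: cycle_edges_def L_def)
qed

(* If two different positions of a repetition-free cycle carry the same edge, then i is the
   position following j (this can only happen on a cycle of length two). *)
lemma cycle_edge_eq_cycle_edge:
  assumes "distinct vs" "i < length vs" "j < length vs" "i \<noteq> j"
    and "cycle_edge vs i = cycle_edge vs j"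
  shows "i = (j + 1) mod length vs"
proof -
  have "vs ! i \<in> {vs ! j, vs ! ((j + 1) mod length vs)}"
    using assms(5) unfolding cycle_edge_def by blast
  moreover have "vs ! i \<noteq> vs ! j" using assms(1-4) by (simp add: nth_eq_iff_index_eq)
  moreover have "(j + 1) mod length vs < length vs"
    using assms(2) by (meson le_less_trans mod_less_divisor zero_le)
  ultimately have "vs ! i = vs ! ((j + 1) mod length vs)" by simp
  then show ?thesis
    using assms(1,2) \<open>(j + 1) mod length vs < length vs\<close> by (simp add: nth_eq_iff_index_eq)
qed

lemma cycle_edge_inj_same_parity:
  assumes "distinct vs" "even (length vs)" "i < length vs" "j < length vs"
    and "even i \<longleftrightarrow> even j" and "cycle_edge vs i = cycle_edge vs j"
  shows "i = j"
proof (rule ccontr)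
  assume "i \<noteq> j"
  then have "i = (j + 1) mod length vs"
    using cycle_edge_eq_cycle_edge assms by blast
  then have "i mod 2 = (j + 1) mod 2"
    using assms(2) by (simp add: mod_mod_cancel)
  then show False using assms(5) by presburger
qed

lemma cycle_edge_neq_next:
  assumes "distinct vs" "3 \<le> length vs" "i + 1 < length vs"
  shows "cycle_edge vs i \<noteq> cycle_edge vs (i + 1)"
proof
  assume "cycle_edge vs i = cycle_edge vs (i + 1)"
  then have "i = (i + 2) mod length vs"
    using cycle_edge_eq_cycle_edge[of vs i "i + 1"] assms by simp
  moreover have "(i + 2) mod length vs \<noteq> i"
  proof (cases "i + 2 < length vs")
    case False
    then have "i + 2 = length vs" using assms(3) by simp
    then show ?thesis using assms(2) by simp
  qed simp
  ultimately show False by simp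
qed

definition alternate_edges :: "'a list \<Rightarrow> nat \<Rightarrow> 'a set list" where
  "alternate_edges vs r = map (\<lambda>j. cycle_edge vs (2 * j + r)) [0..<length vs div 2]"

lemma mset_map_upt_double:
  "mset (map f [0..<2 * m])
     = mset (map (\<lambda>j. f (2 * j)) [0..<m]) + mset (map (\<lambda>j. f (2 * j + 1)) [0..<m])"
  by (induction m) simp_all

lemma cycle_edges_alternate:
  assumes "even (length vs)"
  shows "cycle_edges vs = mset (alternate_edges vs 0) + mset (alternate_edges vs 1)"
proof -
  define m where "m = length vs div 2"
  have "length vs = 2 * m" using assms by (simp add: m_def)
  then have "cycle_edges vs = mset (map (cycle_edge vs) [0..<2 * m])"
    by (simp add: cycle_edges_def)
  also have "\<dots> = mset (alternate_edges vs 0) + mset (alternate_edges vs 1)"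
    unfolding mset_map_upt_double by (simp add: alternate_edges_def m_def)
  finally show ?thesis .
qed

lemma distinct_alternate_edges:
  assumes "distinct vs" "even (length vs)" "r \<le> 1"
  shows "distinct (alternate_edges vs r)"
  unfolding alternate_edges_def distinct_map
proof (intro conjI inj_onI distinct_upt)
  fix i j assume "i \<in> set [0..<length vs div 2]" "j \<in> set [0..<length vs div 2]"
    and "cycle_edge vs (2 * i + r) = cycle_edge vs (2 * j + r)"
  then have "2 * i + r = 2 * j + r"
    using assms by (intro cycle_edge_inj_same_parity[of vs]) auto
  then show "i = j" by simp
qed

lemma alternate_edges_cover:
  assumes "even (length vs)" "r \<le> 1"
  shows "set vs \<subseteq> \<Union> (set (alternate_edges vs r))"
proof
  fix v assume "v \<in> set vs"
  then obtain m where m: "m < length vs" "vs ! m = v" by (auto simp: in_set_conv_nth)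
  define L where "L = length vs"
  have "\<exists>j < L div 2. m = 2 * j + r \<or> m = (2 * j + r + 1) mod L"
  proof (cases "m < r")
    case True
    then have "m = 0" "r = 1" using assms(2) by auto
    have "2 * (L div 2 - 1) + r + 1 = L" and "L div 2 - 1 < L div 2"
      using m assms(1) \<open>r = 1\<close> by (auto simp: L_def)
    then show ?thesis using \<open>m = 0\<close> by (intro exI[of _ "L div 2 - 1"]) simp
  next
    case False
    define j where "j = (m - r) div 2"
    have "j < L div 2" using m assms(1) by (auto simp: j_def L_def)
    moreover have "m = 2 * j + r \<or> m = 2 * j + r + 1" using False by (auto simp: j_def)
    moreover have "m mod L = m" using m by (simp add: L_def)
    ultimately show ?thesis by metis
  qed
  then obtain j where "j < L div 2" and "v \<in> cycle_edge vs (2 * j + r)"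
    using m by (auto simp: cycle_edge_def L_def)
  then show "v \<in> \<Union> (set (alternate_edges vs r))"
    by (auto simp: alternate_edges_def L_def)
qed

lemma cycle_normal_form:
  assumes "distinct vs" "3 \<le> length vs" "a \<in> set vs"
  obtains ws where "distinct ws" "set ws = set vs" "length ws = length vs"
    "cycle_edges ws = cycle_edges vs" "ws ! 0 = a" "ws ! 1 \<noteq> b"
proof -
  obtain k where "k < length vs" "vs ! k = a" using assms(3) by (auto simp: in_set_conv_nth)
  define us where "us = rotate k vs"
  have us: "distinct us" "set us = set vs" "length us = length vs" "cycle_edges us = cycle_edges vs"
    using assms(1) by (simp_all add: us_def cycle_edges_rotate)
  have "vs \<noteq> []" using assms(2) by auto
  then have "us ! 0 = a" using \<open>k < length vs\<close> \<open>vs ! k = a\<close> nth_rotate[of 0 vs k] by (simp add: us_def)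
  show ?thesis
  proof (cases "us ! 1 = b")
    case False
    then show ?thesis using that us \<open>us ! 0 = a\<close> by blast
  next
    case True
    define ws where "ws = rev (rotate1 us)"
    have "us = a # tl us" using \<open>us ! 0 = a\<close> us(3) assms(2)
      by (metis hd_conv_nth list.collapse list.size(3) not_numeral_le_zero)
    then have "rotate1 us = tl us @ [a]" by (metis rotate1.simps(2))
    then have ws: "ws = a # rev (tl us)" by (simp add: ws_def)
    have "ws ! 1 = us ! (length us - 1)"
      using us(3) assms(2) by (subst ws) (simp add: rev_nth nth_tl Suc_diff_Suc)
    also have "\<dots> \<noteq> us ! 1" using us(1,3) assms(2) by (simp add: nth_eq_iff_index_eq)
    finally have "ws ! 1 \<noteq> b" using True by simp
    moreover have "distinct ws" "set ws = set vs" "length ws = length vs"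
      "cycle_edges ws = cycle_edges vs"
      using us by (simp_all add: ws_def cycle_edges_rev cycle_edges_rotate1)
    moreover have "ws ! 0 = a" using ws by simp
    ultimately show ?thesis using that by blast
  qed
qed

lemma disjoint_edges_eq:
  assumes "pairwise disjnt M" "e \<in> M" "e' \<in> M" "v \<in> e" "v \<in> e'"
  shows "e = e'"
  using assms unfolding pairwise_def disjnt_def by blast

lemma perfect_matching_disjoint:
  assumes "perfect_matching V M"
  shows "pairwise disjnt M"
proof (rule pairwiseI)
  fix e e' assume "e \<in> M" "e' \<in> M" "e \<noteq> e'"
  then show "disjnt e e'" using assms unfolding perfect_matching_def disjnt_def by blast
qed

lemma perfect_matching_eq_mset:
  assumes "perfect_matching V M" "distinct es" "set es \<subseteq> M" "V \<subseteq> \<Union> (set es)"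
  shows "mset es = mset_set M"
proof -
  have "M \<subseteq> set es"
  proof
    fix e assume "e \<in> M"
    then have "e \<subseteq> V" "card e = 2" using assms(1) by (auto simp: perfect_matching_def)
    then obtain v where "v \<in> e" "v \<in> V" by (metis card.empty ex_in_conv subsetD zero_neq_numeral)
    then obtain e' where "e' \<in> set es" "v \<in> e'" using assms(4) by blast
    then have "e = e'"
      using disjoint_edges_eq[OF perfect_matching_disjoint[OF assms(1)]] assms(3) \<open>e \<in> M\<close> \<open>v \<in> e\<close>
      by blast
    then show "e \<in> set es" using \<open>e' \<in> set es\<close> by simp
  qed
  then have "set es = M" using assms(3) by blast
  then show ?thesis using mset_set_set[OF assms(2)] by simp
qed

lemma alternating_cycle:
  assumes "distinct vs" "3 \<le> length vs"
    and "pairwise disjnt M\<^sub>1" "pairwise disjnt M\<^sub>2"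
    and "\<And>i. i < length vs \<Longrightarrow> cycle_edge vs i \<in> M\<^sub>1 \<union> M\<^sub>2"
    and "cycle_edge vs 0 \<in> M\<^sub>1"
    and "i < length vs"
  shows "cycle_edge vs i \<in> (if even i then M\<^sub>1 else M\<^sub>2)"
  using assms(7)
proof (induction i)
  case (Suc i)
  have step: "cycle_edge vs (i + 1) \<notin> M" if "pairwise disjnt M" "cycle_edge vs i \<in> M" for M
  proof
    assume "cycle_edge vs (i + 1) \<in> M"
    moreover have "vs ! (i + 1) \<in> cycle_edge vs i" "vs ! (i + 1) \<in> cycle_edge vs (i + 1)"
      using Suc.prems by (simp_all add: cycle_edge_def)
    ultimately have "cycle_edge vs i = cycle_edge vs (i + 1)"
      using disjoint_edges_eq[OF that(1) that(2)] by blast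
    moreover have "cycle_edge vs i \<noteq> cycle_edge vs (i + 1)"
      using cycle_edge_neq_next assms(1,2) Suc.prems by simp
    ultimately show False by contradiction
  qed
  have IH: "cycle_edge vs i \<in> (if even i then M\<^sub>1 else M\<^sub>2)" using Suc by simp
  have "cycle_edge vs (i + 1) \<in> M\<^sub>1 \<union> M\<^sub>2" using assms(5) Suc.prems by simp
  show ?case
  proof (cases "even i")
    case True
    then show ?thesis using IH step[OF assms(3)] \<open>cycle_edge vs (i + 1) \<in> M\<^sub>1 \<union> M\<^sub>2\<close> by simp
  next
    case False
    then show ?thesis using IH step[OF assms(4)] \<open>cycle_edge vs (i + 1) \<in> M\<^sub>1 \<union> M\<^sub>2\<close> by simp
  qed
qed (use assms(6) in simp)

definition compl_grey_edge :: "nat \<Rightarrow> nat \<Rightarrow> nat set" where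
  "compl_grey_edge n v =
     (if v = 0 \<or> v = 2 * n + 1 then {0, 2 * n + 1} else {2 * ((v + 1) div 2) - 1, 2 * ((v + 1) div 2)})"

lemma grey_edges_compl_edge_at:
  assumes "e \<in> grey_edges_compl n" "v \<in> e"
  shows "e = compl_grey_edge n v"
proof -
  consider i where "1 \<le> i" "i \<le> n" "e = {2 * i - 1, 2 * i}" | "e = {0, 2 * n + 1}"
    using assms(1) unfolding grey_edges_compl_def by blast
  then show ?thesis
  proof cases
    case (1 i)
    then have "v = 2 * i - 1 \<or> v = 2 * i" using assms(2) by blast
    then have "v \<noteq> 0 \<and> v \<noteq> 2 * n + 1 \<and> (v + 1) div 2 = i" using 1(1,2) by presburger
    then show ?thesis using 1 by (simp add: compl_grey_edge_def)
  next
    case 2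
    then show ?thesis using assms(2) by (auto simp: compl_grey_edge_def)
  qed
qed

lemma compl_grey_edge_mem:
  assumes "v \<in> verts n"
  shows "compl_grey_edge n v \<in> grey_edges_compl n" "v \<in> compl_grey_edge n v"
proof -
  have "compl_grey_edge n v \<in> grey_edges_compl n \<and> v \<in> compl_grey_edge n v"
  proof (cases "v = 0 \<or> v = 2 * n + 1")
    case True
    then show ?thesis by (auto simp: compl_grey_edge_def grey_edges_compl_def)
  next
    case False
    define k where "k = (v + 1) div 2"
    have "1 \<le> v" "v \<le> 2 * n" using False assms by (auto simp: verts_def)
    then have "1 \<le> k" "k \<le> n" "v = 2 * k - 1 \<or> v = 2 * k" unfolding k_def by presburger+
    then show ?thesis using False unfolding compl_grey_edge_def grey_edges_compl_def k_def[symmetric]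
      by auto
  qed
  then show "compl_grey_edge n v \<in> grey_edges_compl n" "v \<in> compl_grey_edge n v" by auto
qed

lemma grey_edges_compl_perfect_matching: "perfect_matching (verts n) (grey_edges_compl n)"
  unfolding perfect_matching_def
proof (intro conjI)
  show "\<forall>e\<in>grey_edges_compl n. e \<subseteq> verts n \<and> card e = 2"
    by (auto simp: grey_edges_compl_def verts_def)
  show "\<forall>v\<in>verts n. \<exists>!e. e \<in> grey_edges_compl n \<and> v \<in> e"
    using compl_grey_edge_mem grey_edges_compl_edge_at by blast
qed

definition signed_block :: "int \<Rightarrow> nat list" where
  "signed_block x = (if x > 0 then [2 * nat x - 1, 2 * nat x] else [2 * nat \<bar>x\<bar>, 2 * nat \<bar>x\<bar> - 1])"

lemma unsigned_ext_blocks: "unsigned_ext p = 0 # concat (map signed_block p) @ [2 * length p + 1]"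
  unfolding unsigned_ext_def signed_block_def by simp

lemma nth_concat_pairs:
  assumes "\<forall>x\<in>set xs. length (f x) = 2" "j < length xs" "r < 2"
  shows "concat (map f xs) ! (2 * j + r) = f (xs ! j) ! r"
  using assms
proof (induction xs arbitrary: j)
  case (Cons x xs)
  then show ?case by (cases j) (auto simp: nth_append)
qed simp

lemma length_concat_pairs:
  assumes "\<forall>x\<in>set xs. length (f x) = 2"
  shows "length (concat (map f xs)) = 2 * length xs"
  using assms by (induction xs) auto

lemma length_unsigned_ext: "length (unsigned_ext p) = 2 * length p + 2"
  by (simp add: unsigned_ext_blocks length_concat_pairs signed_block_def)

lemma unsigned_ext_nth:
  shows "unsigned_ext p ! 0 = 0"
    and "unsigned_ext p ! (2 * length p + 1) = 2 * length p + 1"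
    and "j < length p \<Longrightarrow> r < 2 \<Longrightarrow> unsigned_ext p ! (2 * j + r + 1) = signed_block (p ! j) ! r"
proof -
  have len: "\<forall>x\<in>set p. length (signed_block x) = 2" by (simp add: signed_block_def)
  show "unsigned_ext p ! 0 = 0" by (simp add: unsigned_ext_blocks)
  show "unsigned_ext p ! (2 * length p + 1) = 2 * length p + 1"
    using length_concat_pairs[OF len] by (simp add: unsigned_ext_blocks nth_append)
  assume "j < length p" "r < 2"
  then show "unsigned_ext p ! (2 * j + r + 1) = signed_block (p ! j) ! r"
    using nth_concat_pairs[OF len] length_concat_pairs[OF len]
    by (simp add: unsigned_ext_blocks nth_append)
qed

lemma signed_block_pair:
  assumes "x \<noteq> 0"
  shows "{signed_block x ! 0, signed_block x ! 1} = {2 * nat \<bar>x\<bar> - 1, 2 * nat \<bar>x\<bar>}"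
  using assms by (auto simp: signed_block_def)

lemma unsigned_ext_inner_edge:
  assumes "j < length p" "p ! j \<noteq> 0"
  shows "cycle_edge (unsigned_ext p) (2 * j + 1) = {2 * nat \<bar>p ! j\<bar> - 1, 2 * nat \<bar>p ! j\<bar>}"
proof -
  have "(2 * j + 1 + 1) mod length (unsigned_ext p) = 2 * j + 1 + 1"
    using assms(1) by (simp add: length_unsigned_ext)
  then show ?thesis
    using unsigned_ext_nth(3)[OF assms(1), of 0] unsigned_ext_nth(3)[OF assms(1), of 1]
      signed_block_pair[OF assms(2)]
    by (simp add: cycle_edge_def)
qed

lemma unsigned_ext_closing_edge:
  "cycle_edge (unsigned_ext p) (2 * length p + 1) = {0, 2 * length p + 1}"
  using unsigned_ext_nth(1,2)[of p] by (simp add: cycle_edge_def length_unsigned_ext insert_commute)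

lemma black_edges_alternate: "black_edges p = mset (alternate_edges (unsigned_ext p) 0)"
  unfolding black_edges_def alternate_edges_def Let_def
  by (intro arg_cong[where f = mset] map_cong) (auto simp: cycle_edge_def length_unsigned_ext)

lemma signed_perm_abs:
  assumes "signed_perm n p"
  shows "(\<lambda>x. nat \<bar>x\<bar>) ` set p = {1..n}" and "0 \<notin> set p"
proof -
  have "abs ` set p = {1..int n}" using assms by (simp add: signed_perm_def)
  moreover have "nat ` {1..int n} = {1..n}"
  proof
    show "{1..n} \<subseteq> nat ` {1..int n}"
    proof
      fix k assume "k \<in> {1..n}"
      then show "k \<in> nat ` {1..int n}" using image_eqI[of k nat "int k"] by simp
    qed
  qed auto
  ultimately have "nat ` abs ` set p = {1..n}" by simp
  then show "(\<lambda>x. nat \<bar>x\<bar>) ` set p = {1..n}" by (simp add: image_image)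
  show "0 \<notin> set p" using \<open>abs ` set p = {1..int n}\<close> by force
qed

lemma verts_blocks: "verts n = {0, 2 * n + 1} \<union> (\<Union>k\<in>{1..n}. {2 * k - 1, 2 * k})"
proof (intro equalityI subsetI)
  fix v assume "v \<in> verts n"
  show "v \<in> {0, 2 * n + 1} \<union> (\<Union>k\<in>{1..n}. {2 * k - 1, 2 * k})"
  proof (cases "v = 0 \<or> v = 2 * n + 1")
    case False
    then have "(v + 1) div 2 \<in> {1..n}" "v \<in> {2 * ((v + 1) div 2) - 1, 2 * ((v + 1) div 2)}"
      using \<open>v \<in> verts n\<close> by (auto simp: verts_def)
    then show ?thesis by blast
  qed blast
qed (auto simp: verts_def)

lemma set_unsigned_ext:
  assumes "signed_perm n p"
  shows "set (unsigned_ext p) = verts n"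
proof -
  have "length p = n" using assms by (simp add: signed_perm_def)
  have "set (signed_block x) = {2 * nat \<bar>x\<bar> - 1, 2 * nat \<bar>x\<bar>}" if "x \<in> set p" for x
    using that signed_perm_abs(2)[OF assms] by (auto simp: signed_block_def)
  then have "set (unsigned_ext p) = {0, 2 * n + 1} \<union> (\<Union>x\<in>set p. {2 * nat \<bar>x\<bar> - 1, 2 * nat \<bar>x\<bar>})"
    using \<open>length p = n\<close> by (auto simp: unsigned_ext_blocks)
  also have "\<dots> = {0, 2 * n + 1} \<union> (\<Union>k\<in>(\<lambda>x. nat \<bar>x\<bar>) ` set p. {2 * k - 1, 2 * k})"
    by auto
  also have "\<dots> = verts n" by (simp only: signed_perm_abs(1)[OF assms] verts_blocks)
  finally show ?thesis .
qed

lemma unsigned_ext_hamiltonian: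
  assumes "signed_perm n p"
  shows "distinct (unsigned_ext p)" and "set (unsigned_ext p) = verts n"
    and "cycle_edges (unsigned_ext p) = black_edges p + mset_set (grey_edges_compl n)"
proof -
  define q where "q = unsigned_ext p"
  have "length p = n" using assms by (simp add: signed_perm_def)
  then have len: "length q = 2 * n + 2" by (simp add: q_def length_unsigned_ext)
  show set: "set (unsigned_ext p) = verts n" by (rule set_unsigned_ext[OF assms])
  show distinct: "distinct (unsigned_ext p)"
    by (rule card_distinct) (simp add: set length_unsigned_ext \<open>length p = n\<close> verts_def)
  have "cycle_edge q (2 * j + 1) \<in> grey_edges_compl n" if "j < n + 1" for j
  proof (cases "j = n")
    case True
    then show ?thesis
      using unsigned_ext_closing_edge[of p] \<open>length p = n\<close> by (simp add: q_def grey_edges_compl_def)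
  next
    case False
    then have "j < length p" "p ! j \<in> set p" using that \<open>length p = n\<close> by auto
    then have "nat \<bar>p ! j\<bar> \<in> {1..n}" and "p ! j \<noteq> 0"
      using signed_perm_abs[OF assms] by (blast, force)
    then show ?thesis using unsigned_ext_inner_edge[OF \<open>j < length p\<close>]
      by (auto simp: q_def grey_edges_compl_def)
  qed
  then have "set (alternate_edges q 1) \<subseteq> grey_edges_compl n"
    using len by (auto simp: alternate_edges_def)
  then have "mset (alternate_edges q 1) = mset_set (grey_edges_compl n)"
    using grey_edges_compl_perfect_matching distinct_alternate_edges[of q 1]
      alternate_edges_cover[of q 1] distinct set len
    by (intro perfect_matching_eq_mset) (auto simp: q_def)
  then show "cycle_edges (unsigned_ext p) = black_edges p + mset_set (grey_edges_compl n)"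
    using cycle_edges_alternate[of q] len by (simp add: q_def black_edges_alternate)
qed

definition signed_of :: "nat \<Rightarrow> int" where
  "signed_of a = (if odd a then int ((a + 1) div 2) else - int (a div 2))"

lemma signed_block_signed_of:
  assumes "1 \<le> k" "{a, b} = {2 * k - 1, 2 * k}"
  shows "signed_block (signed_of a) = [a, b]" and "nat \<bar>signed_of a\<bar> = k"
proof -
  have "(a = 2 * k - 1 \<and> b = 2 * k) \<or> (a = 2 * k \<and> b = 2 * k - 1)"
    using assms(1) assms(2) by (auto simp: doubleton_eq_iff)
  then have "signed_block (signed_of a) = [a, b] \<and> nat \<bar>signed_of a\<bar> = k"
  proof
    assume "a = 2 * k - 1 \<and> b = 2 * k"
    moreover have "odd (2 * k - 1)" "(2 * k - 1 + 1) div 2 = k" using assms(1) by presburger+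
    ultimately show ?thesis using assms(1) by (simp add: signed_of_def signed_block_def)
  next
    assume "a = 2 * k \<and> b = 2 * k - 1"
    then show ?thesis using assms(1) by (simp add: signed_of_def signed_block_def)
  qed
  then show "signed_block (signed_of a) = [a, b]" "nat \<bar>signed_of a\<bar> = k" by simp_all
qed

lemma unsigned_ext_eqI:
  assumes "length ws = 2 * length p + 2" "ws ! 0 = 0" "ws ! (2 * length p + 1) = 2 * length p + 1"
    and "\<And>j. j < length p \<Longrightarrow> signed_block (p ! j) = [ws ! (2 * j + 1), ws ! (2 * j + 2)]"
  shows "unsigned_ext p = ws"
proof (rule nth_equalityI)
  show "length (unsigned_ext p) = length ws" using assms(1) by (simp add: length_unsigned_ext)
  fix i assume "i < length (unsigned_ext p)"
  then have i: "i < 2 * length p + 2" by (simp add: length_unsigned_ext)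
  show "unsigned_ext p ! i = ws ! i"
  proof (cases "i = 0 \<or> i = 2 * length p + 1")
    case True
    then show ?thesis using assms(2,3) unsigned_ext_nth(1,2) by auto
  next
    case False
    define j r where "j = (i - 1) div 2" and "r = (i - 1) mod 2"
    have "j < length p" "r < 2" "i = 2 * j + r + 1" using False i by (auto simp: j_def r_def)
    then show ?thesis using unsigned_ext_nth(3)[of j p r] assms(4)[of j]
      by (cases r) (auto simp: numeral_2_eq_2 less_Suc_eq)
  qed
qed

lemma signed_permI:
  assumes "length p = n" "\<And>x. x \<in> set p \<Longrightarrow> 1 \<le> \<bar>x\<bar> \<and> \<bar>x\<bar> \<le> int n" "distinct (map abs p)"
  shows "signed_perm n p"
proof -
  have "set (map abs p) \<subseteq> {1..int n}" using assms(2) by auto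
  moreover have "card (set (map abs p)) = card {1..int n}"
    using distinct_card[OF assms(3)] assms(1) by simp
  ultimately have "set (map abs p) = {1..int n}" by (intro card_subset_eq) auto
  then show ?thesis using assms(1,3) by (simp add: signed_perm_def)
qed

(* On a repetition-free cycle from 0 to 2n+1, an inner odd edge that is a complementary grey edge
   avoids both ends, so it is a block {2k-1, 2k}. *)
lemma grey_inner_edge_block:
  assumes "distinct ws" "length ws = 2 * n + 2" "ws ! 0 = 0" "ws ! (2 * n + 1) = 2 * n + 1"
    and "j < n" "cycle_edge ws (2 * j + 1) \<in> grey_edges_compl n"
  shows "\<exists>k. 1 \<le> k \<and> k \<le> n \<and> cycle_edge ws (2 * j + 1) = {2 * k - 1, 2 * k}"
proof -
  have "ws ! (2 * j + 1) \<noteq> ws ! 0" "ws ! (2 * j + 1) \<noteq> ws ! (2 * n + 1)"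
    using assms(1,2,5) by (simp_all add: nth_eq_iff_index_eq)
  then have "ws ! (2 * j + 1) \<noteq> 0" "ws ! (2 * j + 1) \<noteq> 2 * n + 1"
    using assms(3,4) by simp_all
  then have "cycle_edge ws (2 * j + 1) \<noteq> {0, 2 * n + 1}" by (auto simp: cycle_edge_def)
  then show ?thesis using assms(6) by (auto simp: grey_edges_compl_def)
qed

lemma unsigned_ext_reconstruct:
  assumes "distinct ws" "length ws = 2 * n + 2" "ws ! 0 = 0" "ws ! (2 * n + 1) = 2 * n + 1"
    and grey: "\<And>j. j < n \<Longrightarrow> cycle_edge ws (2 * j + 1) \<in> grey_edges_compl n"
  obtains p where "signed_perm n p" "unsigned_ext p = ws"
proof -
  have edge: "cycle_edge ws (2 * j + 1) = {ws ! (2 * j + 1), ws ! (2 * j + 2)}" if "j < n" for j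
    using that assms(2) by (simp add: cycle_edge_def)
  have "\<exists>k. 1 \<le> k \<and> k \<le> n \<and> cycle_edge ws (2 * j + 1) = {2 * k - 1, 2 * k}" if "j < n" for j
    using grey_inner_edge_block[OF assms(1-4) that grey[OF that]] .
  then obtain k where k: "\<And>j. j < n \<Longrightarrow> 1 \<le> k j \<and> k j \<le> n \<and> cycle_edge ws (2 * j + 1) = {2 * k j - 1, 2 * k j}"
    by metis
  define p where "p = map (\<lambda>j. signed_of (ws ! (2 * j + 1))) [0..<n]"
  have len: "length p = n" by (simp add: p_def)
  have block: "signed_block (p ! j) = [ws ! (2 * j + 1), ws ! (2 * j + 2)]" and abs: "nat \<bar>p ! j\<bar> = k j"
    if "j < n" for j
    using signed_block_signed_of[of "k j"] k[OF that] edge[OF that] that by (simp_all add: p_def)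
  have "unsigned_ext p = ws"
    using assms(2-4) block by (intro unsigned_ext_eqI) (simp_all add: len)
  moreover have "signed_perm n p"
  proof (rule signed_permI[OF len])
    fix x assume "x \<in> set p"
    then obtain j where "j < n" "x = p ! j" using len by (auto simp: in_set_conv_nth)
    then show "1 \<le> \<bar>x\<bar> \<and> \<bar>x\<bar> \<le> int n" using abs[of j] k[of j] by linarith
  next
    show "distinct (map abs p)"
    proof (rule distinct_conv_nth[THEN iffD2], intro allI impI)
      fix a b assume "a < length (map abs p)" "b < length (map abs p)" "a \<noteq> b"
      then have "a < n" "b < n" using len by simp_all
      show "map abs p ! a \<noteq> map abs p ! b"
      proof
        assume "map abs p ! a = map abs p ! b"
        then have "k a = k b" using abs \<open>a < n\<close> \<open>b < n\<close> len by (metis nth_map)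
        then have "cycle_edge ws (2 * a + 1) = cycle_edge ws (2 * b + 1)"
          using k \<open>a < n\<close> \<open>b < n\<close> by metis
        then have "2 * a + 1 = 2 * b + 1"
          using assms(1,2) \<open>a < n\<close> \<open>b < n\<close> by (intro cycle_edge_inj_same_parity[of ws]) auto
        then show False using \<open>a \<noteq> b\<close> by simp
      qed
    qed
  qed
  ultimately show ?thesis using that by blast
qed

lemma mem_mset_setD: "x \<in># mset_set A \<Longrightarrow> x \<in> A"
  by (cases "finite A") simp_all

lemma grey_edges_compl_at_0:
  assumes "e \<in> grey_edges_compl n" "0 \<in> e"
  shows "e = {0, 2 * n + 1}"
  using grey_edges_compl_edge_at[OF assms] by (simp add: compl_grey_edge_def)

lemma normalised_cycle_alternates:
  assumes pm: "perfect_matching (verts n) dB" and "1 \<le> n"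
    and ws: "distinct ws" "set ws = verts n" "ws ! 0 = 0" "ws ! 1 \<noteq> 2 * n + 1"
    and sub: "cycle_edges ws \<subseteq># mset_set dB + mset_set (grey_edges_compl n)"
    and i: "i < length ws"
  shows "cycle_edge ws i \<in> (if even i then dB else grey_edges_compl n)"
proof -
  let ?C = "grey_edges_compl n"
  have len: "length ws = 2 * n + 2" using distinct_card[OF ws(1)] ws(2) by (simp add: verts_def)
  have edges: "cycle_edge ws i \<in> dB \<union> ?C" if "i < length ws" for i
  proof -
    have "cycle_edge ws i \<in># cycle_edges ws" using that by (simp add: cycle_edges_def)
    then have "cycle_edge ws i \<in># mset_set dB \<or> cycle_edge ws i \<in># mset_set ?C"
      using mset_subset_eqD[OF sub] by simp
    then show ?thesis by (auto dest: mem_mset_setD)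
  qed
  have "cycle_edge ws 0 \<in> dB"
  proof (rule ccontr)
    assume "cycle_edge ws 0 \<notin> dB"
    then have "cycle_edge ws 0 = {0, 2 * n + 1}"
      using edges[of 0] len ws(3) grey_edges_compl_at_0 by (simp add: cycle_edge_def)
    moreover have "ws ! 1 \<noteq> ws ! 0" using ws(1) len by (simp add: nth_eq_iff_index_eq)
    ultimately show False using ws(3,4) len by (auto simp: cycle_edge_def doubleton_eq_iff)
  qed
  then show ?thesis
    using alternating_cycle[OF ws(1) _ perfect_matching_disjoint[OF pm]
        perfect_matching_disjoint[OF grey_edges_compl_perfect_matching] edges] i len \<open>1 \<le> n\<close>
    by simp
qed

(* Backward direction for such a normalised cycle: the closing grey edge forces the cycle to end
   in 2n+1, so it is pi' for some pi, and its even edges are exactly delta_B. *)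
lemma normalised_cycle_to_signed_perm:
  assumes pm: "perfect_matching (verts n) dB" and "1 \<le> n"
    and ws: "distinct ws" "set ws = verts n" "ws ! 0 = 0" "ws ! 1 \<noteq> 2 * n + 1"
    and sub: "cycle_edges ws \<subseteq># mset_set dB + mset_set (grey_edges_compl n)"
  obtains p where "signed_perm n p" "black_edges p = mset_set dB"
proof -
  have len: "length ws = 2 * n + 2" using distinct_card[OF ws(1)] ws(2) by (simp add: verts_def)
  note alt = normalised_cycle_alternates[OF assms]
  have "cycle_edge ws (2 * n + 1) = {0, 2 * n + 1}"
    using alt[of "2 * n + 1"] len ws(3) grey_edges_compl_at_0 by (simp add: cycle_edge_def)
  moreover have "ws ! (2 * n + 1) \<noteq> ws ! 0" using ws(1) len by (simp add: nth_eq_iff_index_eq)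
  ultimately have last: "ws ! (2 * n + 1) = 2 * n + 1"
    using ws(3) len by (auto simp: cycle_edge_def doubleton_eq_iff)
  have "cycle_edge ws (2 * j + 1) \<in> grey_edges_compl n" if "j < n" for j
    using alt[of "2 * j + 1"] that len by simp
  then obtain p where p: "signed_perm n p" "unsigned_ext p = ws"
    using unsigned_ext_reconstruct[OF ws(1) len ws(3) last] by blast
  have "cycle_edge ws (2 * j) \<in> dB" if "j < n + 1" for j
    using alt[of "2 * j"] that len by simp
  then have "set (alternate_edges ws 0) \<subseteq> dB" using len by (auto simp: alternate_edges_def)
  then have "mset (alternate_edges ws 0) = mset_set dB"
    using distinct_alternate_edges[OF ws(1)] alternate_edges_cover[of ws 0] ws(2) len
    by (intro perfect_matching_eq_mset[OF pm]) auto
  then show ?thesis using that p by (simp add: black_edges_alternate)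
qed

lemma perfect_matching_verts_0:
  assumes "perfect_matching (verts 0) dB"
  shows "mset_set dB = black_edges []"
proof -
  have verts: "verts 0 = {0, 1}" by (auto simp: verts_def)
  have "e = {0, 1}" if "e \<in> dB" for e
  proof -
    have "e \<subseteq> {0, 1}" "card e = 2" using assms that verts by (auto simp: perfect_matching_def)
    then show ?thesis by (intro card_subset_eq) auto
  qed
  moreover obtain e where "e \<in> dB" using assms verts by (auto simp: perfect_matching_def)
  ultimately have "dB = {{0, 1}}" by blast
  then show ?thesis by (simp add: black_edges_def unsigned_ext_def)
qed

(* Both configurations share the grey edges, so only the black edges must be compared. *)
lemma configuration_eq_breakpoint_graph:
  assumes "length p = n"
  shows "configuration dB n = breakpoint_graph p \<longleftrightarrow> black_edges p = mset_set dB"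
  using assms by (auto simp: configuration_def breakpoint_graph_def)

lemma signed_perm_imp_hamiltonian:
  assumes "signed_perm n p" "black_edges p = mset_set dB"
  shows "hamiltonian (verts n) (compl_configuration dB n)"
  using unsigned_ext_hamiltonian[OF assms(1)] assms(2)
  unfolding hamiltonian_iff_cycle_edges compl_configuration_def by auto

lemma hamiltonian_imp_signed_perm:
  assumes pm: "perfect_matching (verts n) dB"
    and "hamiltonian (verts n) (compl_configuration dB n)"
  shows "\<exists>p. signed_perm n p \<and> black_edges p = mset_set dB"
proof -
  obtain vs where vs: "distinct vs" "set vs = verts n"
    "cycle_edges vs \<subseteq># mset_set dB + mset_set (grey_edges_compl n)"
    using assms(2) unfolding hamiltonian_iff_cycle_edges compl_configuration_def by blast
  show ?thesis
  proof (cases "n = 0")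
    case True
    then show ?thesis using perfect_matching_verts_0 pm by (auto simp: signed_perm_def)
  next
    case False
    have "3 \<le> length vs" using distinct_card[OF vs(1)] vs(2) False by (simp add: verts_def)
    moreover have "0 \<in> set vs" using vs(2) by (simp add: verts_def)
    ultimately obtain ws where ws: "distinct ws" "set ws = set vs" "cycle_edges ws = cycle_edges vs"
        "ws ! 0 = 0" "ws ! 1 \<noteq> 2 * n + 1"
      using cycle_normal_form[OF vs(1)] by blast
    have "1 \<le> n" "set ws = verts n"
        "cycle_edges ws \<subseteq># mset_set dB + mset_set (grey_edges_compl n)"
      using ws vs False by simp_all
    then show ?thesis
      using normalised_cycle_to_signed_perm[OF pm _ ws(1) _ ws(4,5)] by metis
  qed
qed

theorem mainTheorem2:
  fixes n :: nat and dB :: "nat set set"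
  assumes "perfect_matching (verts n) dB"
  shows "(\<exists>p. signed_perm n p \<and> configuration dB n = breakpoint_graph p)
         \<longleftrightarrow> hamiltonian (verts n) (compl_configuration dB n)"
proof -
  have "(\<exists>p. signed_perm n p \<and> configuration dB n = breakpoint_graph p)
      \<longleftrightarrow> (\<exists>p. signed_perm n p \<and> black_edges p = mset_set dB)"
    using configuration_eq_breakpoint_graph by (auto simp: signed_perm_def)
  also have "\<dots> \<longleftrightarrow> hamiltonian (verts n) (compl_configuration dB n)"
    using signed_perm_imp_hamiltonian hamiltonian_imp_signed_perm[OF assms] by blast
  finally show ?thesis .
qed

end
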